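(* Let $\Omega$ be a connected slice Cauchy domain of $\mathbb H$. Then $$\{f\in SH_L(\Omega):\mathcal Df=0\}=\{f\in SH_L(\Omega): f\equiv\alpha\ \text{for some }\alpha\in\mathbb H\}=\{f\in SH_R(\Omega): f\equiv\alpha\ \text{for some }\alpha\in\mathbb H\}=\{f\in SH_R(\Omega): f\mathcal D=0\}.$$
   Context: $\mathbb H$ denotes the quaternions, $\mathbb S$ the sphere of unit purely imaginary quaternions and $\mathbb C_J=\{u+Jv\}$. A set is axially symmetric if with $u+Iv$ it contains all $u+Jv$, $J\in\mathbb S$. A slice Cauchy domain is an axially symmetric open set $U$ such that for each $J\in\mathbb S$ the boundary of $U\cap\mathbb C_J$ is a finite union of nonintersecting piecewise $C^1$ Jordan curves. $SH_L(\Omega)$ (resp. $SH_R(\Omega)$) denotes the left (resp. right) slice hyperholomorphic functions on $\Omega$: $f(u+Jv)=\alpha(u,v)+J\beta(u,v)$ (resp. $\alpha+\beta J$) for all $J\in\mathbb S$, with $\alpha,\beta$ $\mathbb H$-valued differentiable, $\alpha(u,-v)=\alpha(u,v)$, $\beta(u,-v)=-\beta(u,v)$, $\partial_u\alpha-\partial_v\beta=0$, $\partial_v\alpha+\partial_u\beta=0$. $\mathcal Df=\partial_{q_0}f+\sum_{i=1}^3e_i\partial_{q_i}f$ and $f\mathcal D=\partial_{q_0}f+\sum_{i=1}^3\partial_{q_i}f\,e_i$. *)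

theory Defs
  imports "HOL-Analysis.Analysis"
begin

text \<open>Quaternions are modelled as real^4; component 1 is the real part,
 components 2,3,4 are the coefficients of e1,e2,e3.\<close>

type_synonym quat = "real^4"

definition qmult :: "quat \<Rightarrow> quat \<Rightarrow> quat" (infixl "\<odot>" 70) where
  "p \<odot> q = vector [
     p$1*q$1 - p$2*q$2 - p$3*q$3 - p$4*q$4,
     p$1*q$2 + p$2*q$1 + p$3*q$4 - p$4*q$3,
     p$1*q$3 - p$2*q$4 + p$3*q$1 + p$4*q$2,
     p$1*q$4 + p$2*q$3 - p$3*q$2 + p$4*q$1]"

definition qreal :: "real \<Rightarrow> quat" where
  "qreal u = vector [u, 0, 0, 0]"

definition qe1 :: quat where "qe1 = vector [0, 1, 0, 0]"
definition qe2 :: quat where "qe2 = vector [0, 0, 1, 0]"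
definition qe3 :: quat where "qe3 = vector [0, 0, 0, 1]"

definition qsphere :: "quat set" where
  "qsphere = {J. J$1 = 0 \<and> norm J = 1}"

definition slice_pt :: "real \<Rightarrow> real \<Rightarrow> quat \<Rightarrow> quat" where
  "slice_pt u v J = qreal u + v *\<^sub>R J"

definition axially_symmetric :: "quat set \<Rightarrow> bool" where
  "axially_symmetric U \<longleftrightarrow>
     (\<forall>u v I J. I \<in> qsphere \<longrightarrow> J \<in> qsphere \<longrightarrow> slice_pt u v I \<in> U \<longrightarrow> slice_pt u v J \<in> U)"

text \<open>The slice C_J is identified with the complex plane via
 z \<mapsto> Re z + J Im z; the boundary of U \<inter> C_J (relative to the plane C_J) is then the
 frontier of the corresponding planar set.  Jordan curves are closed simple paths, piecewise
 C^1 means valid_path.\<close>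
definition slice_cauchy_domain :: "quat set \<Rightarrow> bool" where
  "slice_cauchy_domain U \<longleftrightarrow> open U \<and> axially_symmetric U \<and>
     (\<forall>J\<in>qsphere. \<exists>\<Gamma> :: (real \<Rightarrow> complex) set.
        finite \<Gamma> \<and>
        (\<forall>\<gamma>\<in>\<Gamma>. simple_path \<gamma> \<and> pathfinish \<gamma> = pathstart \<gamma> \<and> valid_path \<gamma>) \<and>
        pairwise (\<lambda>\<gamma> \<delta>. path_image \<gamma> \<inter> path_image \<delta> = {}) \<Gamma> \<and>
        frontier {z. slice_pt (Re z) (Im z) J \<in> U} = (\<Union>\<gamma>\<in>\<Gamma>. path_image \<gamma>))"

definition slice_dom :: "quat set \<Rightarrow> (real \<times> real) set" where
  "slice_dom U = {(u, v). \<exists>J\<in>qsphere. slice_pt u v J \<in> U}"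

text \<open>Common conditions on the pair (alpha, beta): differentiability, even/odd symmetry,
 and the Cauchy-Riemann system (partials read off the derivative).\<close>
definition stem_pair :: "quat set \<Rightarrow> (real \<times> real \<Rightarrow> quat) \<Rightarrow> (real \<times> real \<Rightarrow> quat) \<Rightarrow> bool" where
  "stem_pair U \<alpha> \<beta> \<longleftrightarrow>
     (\<exists>A B. \<forall>p\<in>slice_dom U.
        (\<alpha> has_derivative A p) (at p) \<and> (\<beta> has_derivative B p) (at p) \<and>
        \<alpha> (fst p, - snd p) = \<alpha> p \<and> \<beta> (fst p, - snd p) = - \<beta> p \<and>
        A p (1, 0) - B p (0, 1) = 0 \<and> A p (0, 1) + B p (1, 0) = 0)"

definition SH_L :: "quat set \<Rightarrow> (quat \<Rightarrow> quat) set" where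
  "SH_L U = {f. \<exists>\<alpha> \<beta>. stem_pair U \<alpha> \<beta> \<and>
     (\<forall>J\<in>qsphere. \<forall>u v. slice_pt u v J \<in> U \<longrightarrow> f (slice_pt u v J) = \<alpha> (u, v) + J \<odot> \<beta> (u, v))}"

definition SH_R :: "quat set \<Rightarrow> (quat \<Rightarrow> quat) set" where
  "SH_R U = {f. \<exists>\<alpha> \<beta>. stem_pair U \<alpha> \<beta> \<and>
     (\<forall>J\<in>qsphere. \<forall>u v. slice_pt u v J \<in> U \<longrightarrow> f (slice_pt u v J) = \<alpha> (u, v) + \<beta> (u, v) \<odot> J)}"

definition has_partial :: "(quat \<Rightarrow> quat) \<Rightarrow> quat \<Rightarrow> quat \<Rightarrow> quat \<Rightarrow> bool" where
  "has_partial f e q d \<longleftrightarrow> ((\<lambda>t. f (q + t *\<^sub>R e)) has_vector_derivative d) (at 0)"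

definition left_Dirac_zero :: "(quat \<Rightarrow> quat) \<Rightarrow> quat \<Rightarrow> bool" where
  "left_Dirac_zero f q \<longleftrightarrow> (\<exists>d0 d1 d2 d3.
     has_partial f (qreal 1) q d0 \<and> has_partial f qe1 q d1 \<and>
     has_partial f qe2 q d2 \<and> has_partial f qe3 q d3 \<and>
     d0 + qe1 \<odot> d1 + qe2 \<odot> d2 + qe3 \<odot> d3 = 0)"

definition right_Dirac_zero :: "(quat \<Rightarrow> quat) \<Rightarrow> quat \<Rightarrow> bool" where
  "right_Dirac_zero f q \<longleftrightarrow> (\<exists>d0 d1 d2 d3.
     has_partial f (qreal 1) q d0 \<and> has_partial f qe1 q d1 \<and>
     has_partial f qe2 q d2 \<and> has_partial f qe3 q d3 \<and>
     d0 + d1 \<odot> qe1 + d2 \<odot> qe2 + d3 \<odot> qe3 = 0)"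

end

theory Submission
  imports Defs
begin

text \<open>Write a slice function as \<open>f(q) = \<alpha>(q\<^sub>0, |q\<^sub>v|) + J \<beta>(q\<^sub>0, |q\<^sub>v|)\<close> with
  \<open>J = q\<^sub>v / |q\<^sub>v|\<close>. Differentiating along the four coordinate directions at a non-real point
  and summing as in the Dirac operator, the Cauchy-Riemann equations make all derivatives of
  \<open>\<alpha>\<close> and \<open>\<beta>\<close> cancel, while the derivatives of \<open>J\<close> contribute \<open>-2 \<beta> / |q\<^sub>v|\<close>. So
  \<open>Df = 0\<close> forces \<open>\<beta> = 0\<close> off the real axis, hence everywhere by oddness; then the
  Cauchy-Riemann equations kill the derivative of \<open>\<alpha>\<close>, so \<open>f\<close> is locally constant and,
  \<open>\<Omega>\<close> being connected, constant. The right-slice case is symmetric.\<close>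

lemma has_real_derivative_norm_line:
  fixes x y :: "'a::real_inner"
  assumes "x \<noteq> 0"
  shows "((\<lambda>t. norm (x + t *\<^sub>R y)) has_real_derivative sgn x \<bullet> y) (at 0)"
proof -
  have "(norm has_derivative (\<lambda>h. h \<bullet> sgn x)) (at (x + 0 *\<^sub>R y))"
    using has_derivative_norm[OF assms] by simp
  moreover have "((\<lambda>t. x + t *\<^sub>R y) has_derivative (\<lambda>t. t *\<^sub>R y)) (at 0)"
    by (auto intro!: derivative_eq_intros)
  ultimately have "((\<lambda>t. norm (x + t *\<^sub>R y)) has_derivative (\<lambda>t. (t *\<^sub>R y) \<bullet> sgn x)) (at 0)"
    using has_derivative_compose by blast
  moreover have "(\<lambda>t. (t *\<^sub>R y) \<bullet> sgn x) = (*) (sgn x \<bullet> y)"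
    by (auto simp: inner_commute)
  ultimately show ?thesis
    by (simp add: has_field_derivative_def)
qed

lemma has_vector_derivative_sgn_line:
  fixes x y :: "'a::real_inner"
  assumes "x \<noteq> 0"
  shows "((\<lambda>t. sgn (x + t *\<^sub>R y)) has_vector_derivative (y - (sgn x \<bullet> y) *\<^sub>R sgn x) /\<^sub>R norm x) (at 0)"
proof -
  have "((\<lambda>t. inverse (norm (x + t *\<^sub>R y)) *\<^sub>R (x + t *\<^sub>R y)) has_vector_derivative
      inverse (norm x) *\<^sub>R y + (- (sgn x \<bullet> y) / (norm x)\<^sup>2) *\<^sub>R x) (at 0)"
    using assms
    by (auto intro!: derivative_eq_intros has_real_derivative_norm_line[OF assms]
        simp: power2_eq_square divide_inverse)
  then show ?thesis
    using assms by (simp add: sgn_div_norm algebra_simps power2_eq_square divide_inverse)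
qed

lemma linear_pair_eq_zero:
  fixes L :: "real \<times> real \<Rightarrow> 'a::real_vector"
  assumes "linear L" "L (1, 0) = 0" "L (0, 1) = 0"
  shows "L h = 0"
proof -
  have "L h = L (fst h *\<^sub>R (1, 0) + snd h *\<^sub>R (0, 1))" by simp
  also have "\<dots> = fst h *\<^sub>R L (1, 0) + snd h *\<^sub>R L (0, 1)"
    by (simp only: linear_add[OF assms(1)] linear_cmul[OF assms(1)])
  finally show ?thesis using assms by simp
qed

lemma vector_4 [simp]:
  "(vector [a,b,c,d] :: real^4)$1 = a" "(vector [a,b,c,d] :: real^4)$2 = b"
  "(vector [a,b,c,d] :: real^4)$3 = c" "(vector [a,b,c,d] :: real^4)$4 = d"
  unfolding vector_def by simp_all

lemma qmult_nth [simp]: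
  "(p \<odot> q)$1 = p$1*q$1 - p$2*q$2 - p$3*q$3 - p$4*q$4"
  "(p \<odot> q)$2 = p$1*q$2 + p$2*q$1 + p$3*q$4 - p$4*q$3"
  "(p \<odot> q)$3 = p$1*q$3 - p$2*q$4 + p$3*q$1 + p$4*q$2"
  "(p \<odot> q)$4 = p$1*q$4 + p$2*q$3 - p$3*q$2 + p$4*q$1"
  by (simp_all add: qmult_def)

lemma qbasis_nth [simp]:
  "qreal u $1 = u" "qreal u $2 = 0" "qreal u $3 = 0" "qreal u $4 = 0"
  "qe1 $1 = 0" "qe1 $2 = 1" "qe1 $3 = 0" "qe1 $4 = 0"
  "qe2 $1 = 0" "qe2 $2 = 0" "qe2 $3 = 1" "qe2 $4 = 0"
  "qe3 $1 = 0" "qe3 $2 = 0" "qe3 $3 = 0" "qe3 $4 = 1"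
  by (simp_all add: qreal_def qe1_def qe2_def qe3_def)

lemma quat_eq_iff: "(p::quat) = q \<longleftrightarrow> p$1 = q$1 \<and> p$2 = q$2 \<and> p$3 = q$3 \<and> p$4 = q$4"
  by (simp add: vec_eq_iff forall_4)

lemma norm_quat: "norm (p::quat) = sqrt ((p$1)\<^sup>2 + (p$2)\<^sup>2 + (p$3)\<^sup>2 + (p$4)\<^sup>2)"
  by (simp add: norm_vec_def L2_set_def sum_4 add.assoc)

lemma inner_quat: "(p::quat) \<bullet> q = p$1*q$1 + p$2*q$2 + p$3*q$3 + p$4*q$4"
  by (simp add: inner_vec_def sum_4 add.assoc)

lemma bounded_bilinear_qmult: "bounded_bilinear (\<odot>)"
proof -
  have "bilinear (\<odot>)"
    unfolding bilinear_def by (auto intro!: linearI simp: quat_eq_iff algebra_simps)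
  then show ?thesis
    by (simp add: bilinear_conv_bounded_bilinear)
qed

lemma qsphere_components:
  assumes "J \<in> qsphere"
  shows "J$1 = 0" "(J$2)\<^sup>2 + (J$3)\<^sup>2 + (J$4)\<^sup>2 = 1"
proof -
  show J1: "J$1 = 0" using assms by (simp add: qsphere_def)
  have "(J$1)\<^sup>2 + (J$2)\<^sup>2 + (J$3)\<^sup>2 + (J$4)\<^sup>2 = 1"
    using assms by (auto simp: qsphere_def norm_quat)
  then show "(J$2)\<^sup>2 + (J$3)\<^sup>2 + (J$4)\<^sup>2 = 1"
    using J1 by simp
qed

definition qim :: "quat \<Rightarrow> quat" where
  "qim p = p - qreal (p$1)"

lemma qim_nth [simp]: "qim p $1 = 0" "qim p $2 = p$2" "qim p $3 = p$3" "qim p $4 = p$4"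
  by (simp_all add: qim_def)

lemma linear_qim: "linear qim"
  by (auto intro!: linearI simp: quat_eq_iff)

lemma continuous_on_qim: "continuous_on S qim"
  using linear_qim by (auto intro: linear_continuous_on simp: linear_conv_bounded_linear)

definition slice_coord :: "quat \<Rightarrow> real \<times> real" where
  "slice_coord q = (q$1, norm (qim q))"

lemma continuous_on_slice_coord: "continuous_on S slice_coord"
  unfolding slice_coord_def by (auto intro!: continuous_intros continuous_on_qim)

lemma slice_pt_components:
  assumes "J \<in> qsphere"
  shows "qim (slice_pt u v J) = v *\<^sub>R J" "slice_coord (slice_pt u v J) = (u, \<bar>v\<bar>)"
proof -
  have J: "J$1 = 0" "norm J = 1" using assms by (auto simp: qsphere_def)
  then show qim: "qim (slice_pt u v J) = v *\<^sub>R J"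
    by (simp add: slice_pt_def quat_eq_iff)
  show "slice_coord (slice_pt u v J) = (u, \<bar>v\<bar>)"
    unfolding slice_coord_def qim using J by (simp add: slice_pt_def)
qed

lemma slice_pt_sgn_qim:
  assumes "qim q \<noteq> 0"
  shows "sgn (qim q) \<in> qsphere" "slice_pt (q$1) (norm (qim q)) (sgn (qim q)) = q"
  using assms by (auto simp: qsphere_def slice_pt_def quat_eq_iff sgn_div_norm)

lemma slice_pt_decomposition: "\<exists>J\<in>qsphere. slice_pt (q$1) (norm (qim q)) J = q"
proof (cases "qim q = 0")
  case True
  then have "slice_pt (q$1) (norm (qim q)) qe1 = q"
    by (simp add: slice_pt_def quat_eq_iff)
  moreover have "qe1 \<in> qsphere"
    by (simp add: qsphere_def norm_quat)
  ultimately show ?thesis by blast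
next
  case False
  then show ?thesis using slice_pt_sgn_qim by blast
qed

lemma slice_coord_in_slice_dom: "q \<in> U \<Longrightarrow> slice_coord q \<in> slice_dom U"
  using slice_pt_decomposition[of q] by (force simp: slice_dom_def slice_coord_def)

lemma open_slice_dom:
  assumes "open U"
  shows "open (slice_dom U)"
proof -
  have "slice_dom U = (\<Union>J\<in>qsphere. (\<lambda>p. slice_pt (fst p) (snd p) J) -` U)"
    by (auto simp: slice_dom_def)
  moreover have "slice_pt (fst p) (snd p) J = fst p *\<^sub>R qreal 1 + snd p *\<^sub>R J" for p J
    by (simp add: slice_pt_def quat_eq_iff)
  then have "open ((\<lambda>p. slice_pt (fst p) (snd p) J) -` U)" for J
    by (intro open_vimage[OF assms]) (auto intro!: continuous_intros)
  ultimately show ?thesis by auto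
qed

lemma stem_pairE:
  assumes "stem_pair U \<alpha> \<beta>" "p \<in> slice_dom U"
  obtains A B where "(\<alpha> has_derivative A) (at p)" "(\<beta> has_derivative B) (at p)"
    "\<beta> (fst p, - snd p) = - \<beta> p" "A (1, 0) = B (0, 1)" "A (0, 1) = - B (1, 0)"
  using assms by (auto simp: stem_pair_def eq_neg_iff_add_eq_0)

definition slice_rep :: "(quat \<Rightarrow> quat \<Rightarrow> quat) \<Rightarrow> quat set \<Rightarrow> (quat \<Rightarrow> quat) \<Rightarrow>
    (real \<times> real \<Rightarrow> quat) \<Rightarrow> (real \<times> real \<Rightarrow> quat) \<Rightarrow> bool"
  where "slice_rep m U f \<alpha> \<beta> \<longleftrightarrow>
    (\<forall>J\<in>qsphere. \<forall>u v. slice_pt u v J \<in> U \<longrightarrow> f (slice_pt u v J) = \<alpha> (u, v) + m J (\<beta> (u, v)))"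

lemma SH_L_iff: "f \<in> SH_L U \<longleftrightarrow> (\<exists>\<alpha> \<beta>. stem_pair U \<alpha> \<beta> \<and> slice_rep (\<odot>) U f \<alpha> \<beta>)"
  by (simp add: SH_L_def slice_rep_def)

lemma SH_R_iff: "f \<in> SH_R U \<longleftrightarrow> (\<exists>\<alpha> \<beta>. stem_pair U \<alpha> \<beta> \<and> slice_rep (\<lambda>J b. b \<odot> J) U f \<alpha> \<beta>)"
  by (simp add: SH_R_def slice_rep_def)

lemma slice_rep_nonreal:
  assumes "slice_rep m U f \<alpha> \<beta>" "q \<in> U" "qim q \<noteq> 0"
  shows "f q = \<alpha> (slice_coord q) + m (sgn (qim q)) (\<beta> (slice_coord q))"
  using assms slice_pt_sgn_qim[OF assms(3)] unfolding slice_rep_def slice_coord_def by metis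

lemma has_vector_derivative_slice_rep_line:
  fixes m :: "quat \<Rightarrow> quat \<Rightarrow> quat" and \<alpha> \<beta> :: "real \<times> real \<Rightarrow> quat"
  assumes m: "bounded_bilinear m" and q: "qim q \<noteq> 0"
    and A: "(\<alpha> has_derivative A) (at (slice_coord q))"
    and B: "(\<beta> has_derivative B) (at (slice_coord q))"
  defines "J \<equiv> sgn (qim q)"
  shows "((\<lambda>t. \<alpha> (slice_coord (q + t *\<^sub>R e))
              + m (sgn (qim (q + t *\<^sub>R e))) (\<beta> (slice_coord (q + t *\<^sub>R e))))
      has_vector_derivative
        A (e$1, J \<bullet> qim e) + m J (B (e$1, J \<bullet> qim e))
        + m ((qim e - (J \<bullet> qim e) *\<^sub>R J) /\<^sub>R norm (qim q)) (\<beta> (slice_coord q))) (at 0)"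
proof -
  have qim_line: "qim (q + t *\<^sub>R e) = qim q + t *\<^sub>R qim e" for t
    by (simp add: quat_eq_iff)
  have "((\<lambda>t. slice_coord (q + t *\<^sub>R e)) has_vector_derivative (e$1, J \<bullet> qim e)) (at 0)"
    unfolding slice_coord_def qim_line J_def
    by (rule has_vector_derivative_Pair)
      (auto intro!: derivative_eq_intros
        has_real_derivative_norm_line[OF q, unfolded has_real_derivative_iff_has_vector_derivative])
  then have chain: "((\<lambda>t. g (slice_coord (q + t *\<^sub>R e))) has_vector_derivative G (e$1, J \<bullet> qim e)) (at 0)"
    if "(g has_derivative G) (at (slice_coord q))" for g :: "real \<times> real \<Rightarrow> quat" and G
    using vector_derivative_diff_chain_within[of _ _ 0 UNIV g G] that
    by (simp add: o_def has_derivative_at_withinI)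
  have "((\<lambda>t. sgn (qim (q + t *\<^sub>R e))) has_vector_derivative
      (qim e - (J \<bullet> qim e) *\<^sub>R J) /\<^sub>R norm (qim q)) (at 0)"
    unfolding qim_line J_def by (rule has_vector_derivative_sgn_line[OF q])
  from bounded_bilinear.has_vector_derivative[OF m this chain[OF B]]
  have "((\<lambda>t. m (sgn (qim (q + t *\<^sub>R e))) (\<beta> (slice_coord (q + t *\<^sub>R e)))) has_vector_derivative
      m J (B (e$1, J \<bullet> qim e)) + m ((qim e - (J \<bullet> qim e) *\<^sub>R J) /\<^sub>R norm (qim q)) (\<beta> (slice_coord q))) (at 0)"
    by (simp add: J_def)
  from has_vector_derivative_add[OF chain[OF A] this] show ?thesis
    by (simp add: add.assoc)
qed

lemma has_partial_slice_rep:
  fixes m :: "quat \<Rightarrow> quat \<Rightarrow> quat" and \<alpha> \<beta> :: "real \<times> real \<Rightarrow> quat"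
  assumes m: "bounded_bilinear m" and U: "open U" and rep: "slice_rep m U f \<alpha> \<beta>"
    and q: "q \<in> U" "qim q \<noteq> 0"
    and A: "(\<alpha> has_derivative A) (at (slice_coord q))"
    and B: "(\<beta> has_derivative B) (at (slice_coord q))"
    and partial: "has_partial f e q d"
  defines "J \<equiv> sgn (qim q)"
  shows "d = A (e$1, J \<bullet> qim e) + m J (B (e$1, J \<bullet> qim e))
      + m ((qim e - (J \<bullet> qim e) *\<^sub>R J) /\<^sub>R norm (qim q)) (\<beta> (slice_coord q))"
proof -
  let ?T = "(\<lambda>t. q + t *\<^sub>R e) -` (U \<inter> {p. qim p \<noteq> 0})"
  have "open (U \<inter> {p. qim p \<noteq> 0})"
    by (intro open_Int U open_Collect_neq continuous_on_qim continuous_on_const)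
  then have "open ?T"
    by (rule open_vimage) (auto intro!: continuous_intros)
  from has_vector_derivative_slice_rep_line[OF m q(2) A B, of e] this
  have "((\<lambda>t. f (q + t *\<^sub>R e)) has_vector_derivative
      A (e$1, J \<bullet> qim e) + m J (B (e$1, J \<bullet> qim e))
      + m ((qim e - (J \<bullet> qim e) *\<^sub>R J) /\<^sub>R norm (qim q)) (\<beta> (slice_coord q))) (at 0)"
    unfolding J_def by (rule has_vector_derivative_transform_within_open)
      (use q slice_rep_nonreal[OF rep] in auto)
  with partial show ?thesis
    unfolding has_partial_def using vector_derivative_unique_at by blast
qed

lemma has_partial_slice_rep_directions:
  fixes m :: "quat \<Rightarrow> quat \<Rightarrow> quat" and \<alpha> \<beta> :: "real \<times> real \<Rightarrow> quat"
  assumes m: "bounded_bilinear m" and U: "open U" and rep: "slice_rep m U f \<alpha> \<beta>"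
    and q: "q \<in> U" "qim q \<noteq> 0"
    and A: "(\<alpha> has_derivative A) (at (slice_coord q))"
    and B: "(\<beta> has_derivative B) (at (slice_coord q))"
  defines "J \<equiv> sgn (qim q)"
  shows "has_partial f (qreal 1) q d \<Longrightarrow> d = A (1, 0) + m J (B (1, 0))"
    and "e$1 = 0 \<Longrightarrow> has_partial f e q d \<Longrightarrow>
      d = (J \<bullet> e) *\<^sub>R A (0, 1) + m J ((J \<bullet> e) *\<^sub>R B (0, 1))
        + m ((e - (J \<bullet> e) *\<^sub>R J) /\<^sub>R norm (qim q)) (\<beta> (slice_coord q))"
proof -
  note partial = has_partial_slice_rep[OF m U rep q A B, folded J_def]
  show "d = A (1, 0) + m J (B (1, 0))" if "has_partial f (qreal 1) q d"
  proof -
    have "qim (qreal 1) = 0" by (simp add: quat_eq_iff)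
    then show ?thesis
      using partial[OF that] by (simp add: bounded_bilinear.zero_left[OF m])
  qed
  show "d = (J \<bullet> e) *\<^sub>R A (0, 1) + m J ((J \<bullet> e) *\<^sub>R B (0, 1))
      + m ((e - (J \<bullet> e) *\<^sub>R J) /\<^sub>R norm (qim q)) (\<beta> (slice_coord q))"
    if "e$1 = 0" "has_partial f e q d"
  proof -
    have "qim e = e" using that(1) by (simp add: quat_eq_iff)
    moreover have "L (0, s) = s *\<^sub>R L (0, 1)" if "linear L" for L :: "real \<times> real \<Rightarrow> quat" and s
      using linear_cmul[OF that, of s "(0, 1)"] by simp
    ultimately show ?thesis
      using partial[OF that(2)] that(1) has_derivative_linear[OF A] has_derivative_linear[OF B] by simp
  qed
qed

text \<open>The witnesses are \<open>a = \<partial>\<^sub>v\<alpha>\<close> and \<open>b = \<partial>\<^sub>v\<beta>\<close> at \<open>slice_coord q\<close>; by the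
  Cauchy-Riemann equations \<open>\<partial>\<^sub>u\<alpha> = b\<close> and \<open>\<partial>\<^sub>u\<beta> = -a\<close>.\<close>

lemma slice_rep_coordinate_partials:
  fixes m :: "quat \<Rightarrow> quat \<Rightarrow> quat" and \<alpha> \<beta> :: "real \<times> real \<Rightarrow> quat"
  assumes m: "bounded_bilinear m" and U: "open U" and stem: "stem_pair U \<alpha> \<beta>"
    and rep: "slice_rep m U f \<alpha> \<beta>" and q: "q \<in> U" "qim q \<noteq> 0"
  defines "J \<equiv> sgn (qim q)" and "w \<equiv> inverse (norm (qim q))" and "x \<equiv> \<beta> (slice_coord q)"
  obtains a b where
    "\<And>d. has_partial f (qreal 1) q d \<Longrightarrow> d = b + m J (- a)"
    "\<And>d. has_partial f qe1 q d \<Longrightarrow>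
      d = (J$2) *\<^sub>R a + m J ((J$2) *\<^sub>R b) + m (w *\<^sub>R (qe1 - (J$2) *\<^sub>R J)) x"
    "\<And>d. has_partial f qe2 q d \<Longrightarrow>
      d = (J$3) *\<^sub>R a + m J ((J$3) *\<^sub>R b) + m (w *\<^sub>R (qe2 - (J$3) *\<^sub>R J)) x"
    "\<And>d. has_partial f qe3 q d \<Longrightarrow>
      d = (J$4) *\<^sub>R a + m J ((J$4) *\<^sub>R b) + m (w *\<^sub>R (qe3 - (J$4) *\<^sub>R J)) x"
proof -
  obtain A B where A: "(\<alpha> has_derivative A) (at (slice_coord q))"
    and B: "(\<beta> has_derivative B) (at (slice_coord q))"
    and CR: "A (1, 0) = B (0, 1)" "B (1, 0) = - A (0, 1)"
    using stem_pairE[OF stem slice_coord_in_slice_dom[OF q(1)]] by (metis minus_equation_iff)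
  note partial = has_partial_slice_rep_directions[OF m U rep q A B, folded J_def w_def x_def]
  have "J \<bullet> qe1 = J$2" "J \<bullet> qe2 = J$3" "J \<bullet> qe3 = J$4"
    by (simp_all add: inner_quat)
  then show thesis
    using partial(1) partial(2)[of qe1] partial(2)[of qe2] partial(2)[of qe3] CR
    by (intro that[where a = "A (0, 1)" and b = "B (0, 1)"]) simp_all
qed

text \<open>Since \<open>J\<^sup>2 = -1\<close>, \<open>\<Sum> J\<^sub>i e\<^sub>i = J\<close> and \<open>\<Sum> e\<^sub>i\<^sup>2 = -3\<close>, the derivative terms
  cancel and the \<open>x\<close>-terms add up to \<open>w (-3 - J\<^sup>2) x = -2 w x\<close>.\<close>

lemma left_Dirac_identity:
  fixes J a b x :: quat and w :: real
  assumes "J$1 = 0" "(J$2)\<^sup>2 + (J$3)\<^sup>2 + (J$4)\<^sup>2 = 1"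
  shows "(b + J \<odot> (- a))
     + qe1 \<odot> ((J$2) *\<^sub>R a + J \<odot> ((J$2) *\<^sub>R b) + (w *\<^sub>R (qe1 - (J$2) *\<^sub>R J)) \<odot> x)
     + qe2 \<odot> ((J$3) *\<^sub>R a + J \<odot> ((J$3) *\<^sub>R b) + (w *\<^sub>R (qe2 - (J$3) *\<^sub>R J)) \<odot> x)
     + qe3 \<odot> ((J$4) *\<^sub>R a + J \<odot> ((J$4) *\<^sub>R b) + (w *\<^sub>R (qe3 - (J$4) *\<^sub>R J)) \<odot> x)
     = (-2 * w) *\<^sub>R x"
  unfolding quat_eq_iff using assms by simp algebra

lemma right_Dirac_identity:
  fixes J a b x :: quat and w :: real
  assumes "J$1 = 0" "(J$2)\<^sup>2 + (J$3)\<^sup>2 + (J$4)\<^sup>2 = 1"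
  shows "(b + (- a) \<odot> J)
     + ((J$2) *\<^sub>R a + ((J$2) *\<^sub>R b) \<odot> J + x \<odot> (w *\<^sub>R (qe1 - (J$2) *\<^sub>R J))) \<odot> qe1
     + ((J$3) *\<^sub>R a + ((J$3) *\<^sub>R b) \<odot> J + x \<odot> (w *\<^sub>R (qe2 - (J$3) *\<^sub>R J))) \<odot> qe2
     + ((J$4) *\<^sub>R a + ((J$4) *\<^sub>R b) \<odot> J + x \<odot> (w *\<^sub>R (qe3 - (J$4) *\<^sub>R J))) \<odot> qe3
     = (-2 * w) *\<^sub>R x"
  unfolding quat_eq_iff using assms by simp algebra

lemma stem_vanishes_if_left_Dirac_zero:
  assumes U: "open U" and stem: "stem_pair U \<alpha> \<beta>" and rep: "slice_rep (\<odot>) U f \<alpha> \<beta>"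
    and q: "q \<in> U" "qim q \<noteq> 0" and Dirac: "left_Dirac_zero f q"
  shows "\<beta> (slice_coord q) = 0"
proof -
  obtain d0 d1 d2 d3 where d: "has_partial f (qreal 1) q d0" "has_partial f qe1 q d1"
      "has_partial f qe2 q d2" "has_partial f qe3 q d3"
    and sum: "d0 + qe1 \<odot> d1 + qe2 \<odot> d2 + qe3 \<odot> d3 = 0"
    using Dirac unfolding left_Dirac_zero_def by blast
  show ?thesis
  proof (cases rule: slice_rep_coordinate_partials[OF bounded_bilinear_qmult U stem rep q,
        case_names partials])
    case (partials a b)
    have "(-2 * inverse (norm (qim q))) *\<^sub>R \<beta> (slice_coord q) = 0"
      unfolding sum[symmetric] partials(1)[OF d(1)] partials(2)[OF d(2)]
        partials(3)[OF d(3)] partials(4)[OF d(4)]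
      by (rule left_Dirac_identity[OF qsphere_components[OF slice_pt_sgn_qim(1)[OF q(2)]],
            symmetric])
    then show ?thesis
      using q(2) by simp
  qed
qed

lemma stem_vanishes_if_right_Dirac_zero:
  assumes U: "open U" and stem: "stem_pair U \<alpha> \<beta>" and rep: "slice_rep (\<lambda>J b. b \<odot> J) U f \<alpha> \<beta>"
    and q: "q \<in> U" "qim q \<noteq> 0" and Dirac: "right_Dirac_zero f q"
  shows "\<beta> (slice_coord q) = 0"
proof -
  obtain d0 d1 d2 d3 where d: "has_partial f (qreal 1) q d0" "has_partial f qe1 q d1"
      "has_partial f qe2 q d2" "has_partial f qe3 q d3"
    and sum: "d0 + d1 \<odot> qe1 + d2 \<odot> qe2 + d3 \<odot> qe3 = 0"
    using Dirac unfolding right_Dirac_zero_def by blast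
  show ?thesis
  proof (cases rule: slice_rep_coordinate_partials[OF bounded_bilinear.flip[OF bounded_bilinear_qmult]
        U stem rep q, case_names partials])
    case (partials a b)
    have "(-2 * inverse (norm (qim q))) *\<^sub>R \<beta> (slice_coord q) = 0"
      unfolding sum[symmetric] partials(1)[OF d(1)] partials(2)[OF d(2)]
        partials(3)[OF d(3)] partials(4)[OF d(4)]
      by (rule right_Dirac_identity[OF qsphere_components[OF slice_pt_sgn_qim(1)[OF q(2)]],
            symmetric])
    then show ?thesis
      using q(2) by simp
  qed
qed

lemma stem_vanishes_on_slice_dom:
  assumes stem: "stem_pair U \<alpha> \<beta>"
    and nonreal: "\<And>q. q \<in> U \<Longrightarrow> qim q \<noteq> 0 \<Longrightarrow> \<beta> (slice_coord q) = 0"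
    and p: "p \<in> slice_dom U"
  shows "\<beta> p = 0"
proof -
  obtain u v J where p_eq: "p = (u, v)" and J: "J \<in> qsphere" "slice_pt u v J \<in> U"
    using p by (auto simp: slice_dom_def)
  have odd: "\<beta> (u, - v) = - \<beta> (u, v)"
    using stem_pairE[OF stem p] p_eq by auto
  have "\<beta> (u, \<bar>v\<bar>) = 0"
  proof (cases "v = 0")
    case True
    then have "\<beta> (u, 0) = - \<beta> (u, 0)"
      using odd by simp
    then have "(2::real) *\<^sub>R \<beta> (u, 0) = 0"
      by (metis add.right_inverse scaleR_2)
    then show ?thesis
      using True by simp
  next
    case False
    have "J \<noteq> 0"
      using J(1) by (auto simp: qsphere_def)
    then show ?thesis
      using nonreal[OF J(2)] slice_pt_components[OF J(1)] False by simp
  qed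
  then show ?thesis
    unfolding p_eq by (cases "v \<ge> 0") (auto simp: odd)
qed

lemma stem_locally_constant:
  assumes U: "open U" and stem: "stem_pair U \<alpha> \<beta>" and \<beta>0: "\<forall>p\<in>slice_dom U. \<beta> p = 0"
    and p: "p \<in> slice_dom U"
  shows "\<exists>e>0. \<forall>y\<in>ball p e. \<alpha> y = \<alpha> p"
proof -
  have deriv: "(\<alpha> has_derivative (\<lambda>_. 0)) (at y)" if y: "y \<in> slice_dom U" for y
  proof -
    obtain A B where A: "(\<alpha> has_derivative A) (at y)" and B: "(\<beta> has_derivative B) (at y)"
      and CR: "A (1, 0) = B (0, 1)" "A (0, 1) = - B (1, 0)"
      using stem_pairE[OF stem y] by blast
    have "((\<lambda>_. 0) has_derivative B) (at y)"
      by (rule has_derivative_transform_within_open[OF B open_slice_dom[OF U] y]) (simp add: \<beta>0)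
    then have "B = (\<lambda>_. 0)"
      using has_derivative_unique has_derivative_const by blast
    then have "A = (\<lambda>_. 0)"
      using linear_pair_eq_zero[OF has_derivative_linear[OF A]] CR by auto
    with A show ?thesis by simp
  qed
  obtain e where e: "e > 0" "ball p e \<subseteq> slice_dom U"
    using open_slice_dom[OF U] p openE by blast
  have "\<exists>c. \<forall>y\<in>ball p e. \<alpha> y = c"
  proof (rule has_derivative_zero_constant[OF convex_ball])
    fix y
    assume "y \<in> ball p e"
    with e(2) show "(\<alpha> has_derivative (\<lambda>_. 0)) (at y within ball p e)"
      by (blast intro: has_derivative_at_withinI deriv)
  qed
  then show ?thesis
    using e by (metis centre_in_ball)
qed

lemma constant_if_stem_vanishes:
  fixes m :: "quat \<Rightarrow> quat \<Rightarrow> quat"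
  assumes m: "bounded_bilinear m" and U: "open U" "connected U"
    and stem: "stem_pair U \<alpha> \<beta>" and rep: "slice_rep m U f \<alpha> \<beta>"
    and \<beta>0: "\<forall>p\<in>slice_dom U. \<beta> p = 0"
  shows "\<exists>a. \<forall>q\<in>U. f q = a"
proof -
  have f: "f q = \<alpha> (slice_coord q)" if q: "q \<in> U" for q
  proof -
    obtain J where "J \<in> qsphere" "slice_pt (q$1) (norm (qim q)) J = q"
      using slice_pt_decomposition by blast
    then have "f q = \<alpha> (slice_coord q) + m J (\<beta> (slice_coord q))"
      using rep q unfolding slice_rep_def slice_coord_def by metis
    then show ?thesis
      using \<beta>0 slice_coord_in_slice_dom[OF q] bounded_bilinear.zero_right[OF m] by simp
  qed
  have locally_const: "\<forall>q\<in>U. eventually (\<lambda>q'. f q = f q') (at q within U)"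
  proof
    fix q
    assume q: "q \<in> U"
    obtain e where e: "e > 0" "\<forall>y\<in>ball (slice_coord q) e. \<alpha> y = \<alpha> (slice_coord q)"
      using stem_locally_constant[OF U(1) stem \<beta>0 slice_coord_in_slice_dom[OF q]] by blast
    have "open (slice_coord -` ball (slice_coord q) e)"
      using continuous_on_slice_coord open_vimage by blast
    moreover have "q \<in> slice_coord -` ball (slice_coord q) e"
      using e(1) by simp
    moreover have "\<forall>q'\<in>slice_coord -` ball (slice_coord q) e. q' \<in> U \<longrightarrow> f q = f q'"
      using e(2) f q by simp
    ultimately show "eventually (\<lambda>q'. f q = f q') (at q within U)"
      unfolding eventually_at_topological by blast
  qed
  show ?thesis
  proof (cases "U = {}")
    case False
    then obtain q0 where "q0 \<in> U" by blast
    then have "\<forall>q\<in>U. f q = f q0"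
      using connected_local_const[OF U(2) _ _ locally_const] by blast
    then show ?thesis by blast
  qed simp
qed

lemma left_Dirac_zero_imp_constant:
  assumes U: "open U" "connected U" and f: "f \<in> SH_L U" and Dirac: "\<forall>q\<in>U. left_Dirac_zero f q"
  shows "\<exists>a. \<forall>q\<in>U. f q = a"
proof -
  obtain \<alpha> \<beta> where stem: "stem_pair U \<alpha> \<beta>" and rep: "slice_rep (\<odot>) U f \<alpha> \<beta>"
    using f SH_L_iff by blast
  have "\<forall>p\<in>slice_dom U. \<beta> p = 0"
  proof
    fix p
    assume "p \<in> slice_dom U"
    then show "\<beta> p = 0"
      by (rule stem_vanishes_on_slice_dom[OF stem, rotated])
        (use stem_vanishes_if_left_Dirac_zero[OF U(1) stem rep] Dirac in blast)
  qed
  then show ?thesis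
    by (rule constant_if_stem_vanishes[OF bounded_bilinear_qmult U stem rep])
qed

lemma right_Dirac_zero_imp_constant:
  assumes U: "open U" "connected U" and f: "f \<in> SH_R U" and Dirac: "\<forall>q\<in>U. right_Dirac_zero f q"
  shows "\<exists>a. \<forall>q\<in>U. f q = a"
proof -
  obtain \<alpha> \<beta> where stem: "stem_pair U \<alpha> \<beta>" and rep: "slice_rep (\<lambda>J b. b \<odot> J) U f \<alpha> \<beta>"
    using f SH_R_iff by blast
  have "\<forall>p\<in>slice_dom U. \<beta> p = 0"
  proof
    fix p
    assume "p \<in> slice_dom U"
    then show "\<beta> p = 0"
      by (rule stem_vanishes_on_slice_dom[OF stem, rotated])
        (use stem_vanishes_if_right_Dirac_zero[OF U(1) stem rep] Dirac in blast)
  qed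
  then show ?thesis
    by (rule constant_if_stem_vanishes[OF bounded_bilinear.flip[OF bounded_bilinear_qmult] U stem rep])
qed

lemma constant_in_SH:
  assumes "\<forall>q\<in>U. f q = a"
  shows "f \<in> SH_L U" "f \<in> SH_R U"
proof -
  have "stem_pair U (\<lambda>_. a) (\<lambda>_. 0)"
    unfolding stem_pair_def by (intro exI[of _ "\<lambda>_ _. 0"]) simp
  moreover have "slice_rep m U f (\<lambda>_. a) (\<lambda>_. 0)" if "bounded_bilinear m" for m
    using assms bounded_bilinear.zero_right[OF that] by (simp add: slice_rep_def)
  ultimately show "f \<in> SH_L U" "f \<in> SH_R U"
    unfolding SH_L_iff SH_R_iff
    by (blast intro: bounded_bilinear_qmult bounded_bilinear.flip[OF bounded_bilinear_qmult])+
qed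

lemma has_partial_locally_constant:
  assumes "open U" "q \<in> U" "\<forall>p\<in>U. f p = a"
  shows "has_partial f e q 0"
  unfolding has_partial_def
proof (rule has_vector_derivative_transform_within_open[of "\<lambda>_. a"])
  show "open ((\<lambda>t. q + t *\<^sub>R e) -` U)"
    by (rule open_vimage[OF assms(1)]) (auto intro!: continuous_intros)
qed (use assms in auto)

lemma Dirac_zero_if_constant:
  assumes "open U" "q \<in> U" "\<forall>p\<in>U. f p = a"
  shows "left_Dirac_zero f q" "right_Dirac_zero f q"
  unfolding left_Dirac_zero_def right_Dirac_zero_def
  by (auto intro!: exI[of _ 0] has_partial_locally_constant[OF assms]
      simp: bounded_bilinear.zero_left[OF bounded_bilinear_qmult]
        bounded_bilinear.zero_right[OF bounded_bilinear_qmult])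

theorem theorem5p10:
  fixes \<Omega> :: "quat set"
  assumes "slice_cauchy_domain \<Omega>" and "connected \<Omega>"
  shows "{f \<in> SH_L \<Omega>. \<forall>q\<in>\<Omega>. left_Dirac_zero f q}
           = {f \<in> SH_L \<Omega>. \<exists>a::quat. \<forall>q\<in>\<Omega>. f q = a}
       \<and> {f \<in> SH_L \<Omega>. \<exists>a::quat. \<forall>q\<in>\<Omega>. f q = a}
           = {f \<in> SH_R \<Omega>. \<exists>a::quat. \<forall>q\<in>\<Omega>. f q = a}
       \<and> {f \<in> SH_R \<Omega>. \<exists>a::quat. \<forall>q\<in>\<Omega>. f q = a}
           = {f \<in> SH_R \<Omega>. \<forall>q\<in>\<Omega>. right_Dirac_zero f q}"
proof -
  have U: "open \<Omega>"
    using assms(1) by (simp add: slice_cauchy_domain_def)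
  have "{f \<in> SH_L \<Omega>. \<forall>q\<in>\<Omega>. left_Dirac_zero f q} = {f \<in> SH_L \<Omega>. \<exists>a. \<forall>q\<in>\<Omega>. f q = a}"
    using left_Dirac_zero_imp_constant[OF U assms(2)] Dirac_zero_if_constant(1)[OF U] by blast
  moreover have "{f \<in> SH_L \<Omega>. \<exists>a. \<forall>q\<in>\<Omega>. f q = a} = {f \<in> SH_R \<Omega>. \<exists>a. \<forall>q\<in>\<Omega>. f q = a}"
    using constant_in_SH by blast
  moreover have "{f \<in> SH_R \<Omega>. \<exists>a. \<forall>q\<in>\<Omega>. f q = a} = {f \<in> SH_R \<Omega>. \<forall>q\<in>\<Omega>. right_Dirac_zero f q}"
    using right_Dirac_zero_imp_constant[OF U assms(2)] Dirac_zero_if_constant(2)[OF U] by blast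
  ultimately show ?thesis
    by (intro conjI)
qed

end
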